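(* Let $G'$ be a context-free grammar with start symbol $s$, no $\varepsilon$-rules and no useless nonterminal, let $\ell$ be a prefix of $G'$, and let $\mathrm{Expl}(G_\ell)$ be its explanation graph (defined in the context). Then $\mathrm{Expl}(G_\ell)$ is linear.
   Context: Grammar: $G'$ has finite terminal set $\Sigma$, finite nonterminal set $N$, start symbol $s\in N$; every rule $A\to\alpha$ has $\alpha\in(N\cup\Sigma)^+$; no nonterminal is useless (each has a rule occurring in some derivation of a terminal string from $s$). A prefix is a nonempty string $\ell\in\Sigma^+$ that is an initial segment of some terminal string derivable from $s$. Explanation graph. For a prefix $\ell$ consider ground atoms $q(\ell)$, $p(\beta,u,v)$ with $\beta\in(N\cup\Sigma)^*$, $u,v\in\Sigma^*$, and switch atoms $m(A\to\alpha)$ for rules of $G'$. Consider all ground clauses: (C0) $q(\ell)\leftarrow p(s,\ell,\varepsilon)$; (C1) $p(\varepsilon,u,u)\leftarrow$ (empty body), for all $u$; (C2) for $a\in\Sigma$: $p(a\beta,a,\varepsilon)\leftarrow$ (empty body); and $p(a\beta,av,w)\leftarrow p(\beta,v,w)$ whenever $v\neq\varepsilon$; (C3) for $A\in N$ and each rule $A\to\alpha$: $p(A\beta,u,\varepsilon)\leftarrow m(A\to\alpha)\wedge p(\alpha,u,\varepsilon)$; and $p(A\beta,u,w)\leftarrow m(A\to\alpha)\wedge p(\alpha,u,v)\wedge p(\beta,v,w)$ whenever $v\neq\varepsilon$. A $p$- or $q$-atom is provable if it lies in the least Herbrand model of these clauses with all $m$-atoms taken as true. The defined goals of $\mathrm{Expl}(G_\ell)$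 form the smallest set containing $q(\ell)$ such that whenever $H$ is a defined goal and $H\leftarrow\alpha$ is one of the clauses above whose $p$-atoms are all provable, every $p$-atom of $\alpha$ is a defined goal. The defining formula of a defined goal $H$ is $H\Leftrightarrow\alpha_1\vee\dots\vee\alpha_M$, where the $\alpha_i$ are the bodies of all such clauses with head $H$ whose $p$-atoms are all provable. $H$ is a parent of $C$ if $C$ occurs in some $\alpha_i$; the ancestor relation is the transitive closure of the parent relation. Two defined goals $A,B$ are equivalent if $A=B$ or each is an ancestor of the other; the equivalence classes are called SCCs. A defining formula $H\Leftrightarrow\alpha_1\vee\dots\vee\alpha_M$ is linear if no $\alpha_i$ contains two (occurrences of) defined goals belonging to the same SCC; $\mathrm{Expl}(G_\ell)$ is linear if every defining formula in it is linear. *)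

theory Defs
  imports Main
begin

datatype ('t, 'n) sym = T 't | NT 'n

type_synonym ('t, 'n) rule = "'n \<times> ('t, 'n) sym list"

definition syms :: "'t set \<Rightarrow> 'n set \<Rightarrow> ('t, 'n) sym set" where
  "syms Sig Nts = T ` Sig \<union> NT ` Nts"

definition step_with :: "('t, 'n) rule set \<Rightarrow> ('t, 'n) rule \<Rightarrow> ('t, 'n) sym list \<Rightarrow> ('t, 'n) sym list \<Rightarrow> bool" where
  "step_with R r xs ys \<longleftrightarrow> r \<in> R \<and> (\<exists>u v. xs = u @ [NT (fst r)] @ v \<and> ys = u @ snd r @ v)"

definition derives :: "('t, 'n) rule set \<Rightarrow> ('t, 'n) sym list \<Rightarrow> ('t, 'n) sym list \<Rightarrow> bool" where
  "derives R = (\<lambda>xs ys. \<exists>r. step_with R r xs ys)\<^sup>*\<^sup>*"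

definition wf_grammar :: "'t set \<Rightarrow> 'n set \<Rightarrow> ('t, 'n) rule set \<Rightarrow> 'n \<Rightarrow> bool" where
  "wf_grammar Sig Nts R s \<longleftrightarrow> finite Sig \<and> finite Nts \<and> finite R \<and> s \<in> Nts \<and>
     (\<forall>(A, \<alpha>) \<in> R. A \<in> Nts \<and> \<alpha> \<noteq> [] \<and> set \<alpha> \<subseteq> syms Sig Nts)"

definition no_useless :: "'t set \<Rightarrow> 'n set \<Rightarrow> ('t, 'n) rule set \<Rightarrow> 'n \<Rightarrow> bool" where
  "no_useless Sig Nts R s \<longleftrightarrow>
     (\<forall>A \<in> Nts. \<exists>\<alpha> xs ys w. (A, \<alpha>) \<in> R \<and> derives R [NT s] xs \<and> step_with R (A, \<alpha>) xs ys \<and>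
        derives R ys (map T w) \<and> set w \<subseteq> Sig)"

definition is_prefix :: "'t set \<Rightarrow> 'n set \<Rightarrow> ('t, 'n) rule set \<Rightarrow> 'n \<Rightarrow> 't list \<Rightarrow> bool" where
  "is_prefix Sig Nts R s lp \<longleftrightarrow> lp \<noteq> [] \<and>
     (\<exists>w. set (lp @ w) \<subseteq> Sig \<and> derives R [NT s] (map T (lp @ w)))"

datatype ('t, 'n) atom =
    Q "'t list"
  | P "('t, 'n) sym list" "'t list" "'t list"
  | M "('t, 'n) rule"

fun is_P :: "('t, 'n) atom \<Rightarrow> bool" where
  "is_P (P _ _ _) = True"
| "is_P _ = False"

text \<open>All ground clauses (C0)--(C3), as pairs (head, body); bodies are lists so that
  occurrences are counted.\<close>
inductive_set clauses :: "'t set \<Rightarrow> 'n set \<Rightarrow> ('t, 'n) rule set \<Rightarrow> 'n \<Rightarrow> 't list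
    \<Rightarrow> (('t, 'n) atom \<times> ('t, 'n) atom list) set"
  for Sig Nts R s lp where
  C0: "(Q lp, [P [NT s] lp []]) \<in> clauses Sig Nts R s lp"
| C1: "set u \<subseteq> Sig \<Longrightarrow> (P [] u u, []) \<in> clauses Sig Nts R s lp"
| C2a: "a \<in> Sig \<Longrightarrow> set \<beta> \<subseteq> syms Sig Nts \<Longrightarrow>
        (P (T a # \<beta>) [a] [], []) \<in> clauses Sig Nts R s lp"
| C2b: "a \<in> Sig \<Longrightarrow> set \<beta> \<subseteq> syms Sig Nts \<Longrightarrow> set v \<subseteq> Sig \<Longrightarrow> set w \<subseteq> Sig \<Longrightarrow>
        v \<noteq> [] \<Longrightarrow> (P (T a # \<beta>) (a # v) w, [P \<beta> v w]) \<in> clauses Sig Nts R s lp"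
| C3a: "(A, \<alpha>) \<in> R \<Longrightarrow> set \<beta> \<subseteq> syms Sig Nts \<Longrightarrow> set u \<subseteq> Sig \<Longrightarrow>
        (P (NT A # \<beta>) u [], [M (A, \<alpha>), P \<alpha> u []]) \<in> clauses Sig Nts R s lp"
| C3b: "(A, \<alpha>) \<in> R \<Longrightarrow> set \<beta> \<subseteq> syms Sig Nts \<Longrightarrow> set u \<subseteq> Sig \<Longrightarrow>
        set v \<subseteq> Sig \<Longrightarrow> set w \<subseteq> Sig \<Longrightarrow> v \<noteq> [] \<Longrightarrow>
        (P (NT A # \<beta>) u w, [M (A, \<alpha>), P \<alpha> u v, P \<beta> v w]) \<in> clauses Sig Nts R s lp"

text \<open>Least Herbrand model with all m-atoms taken as true.\<close>
inductive provable :: "'t set \<Rightarrow> 'n set \<Rightarrow> ('t, 'n) rule set \<Rightarrow> 'n \<Rightarrow> 't list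
    \<Rightarrow> ('t, 'n) atom \<Rightarrow> bool"
  for Sig Nts R s lp where
  switch: "provable Sig Nts R s lp (M r)"
| clause: "(H, B) \<in> clauses Sig Nts R s lp \<Longrightarrow> (\<forall>x \<in> set B. provable Sig Nts R s lp x) \<Longrightarrow>
           provable Sig Nts R s lp H"

definition active :: "'t set \<Rightarrow> 'n set \<Rightarrow> ('t, 'n) rule set \<Rightarrow> 'n \<Rightarrow> 't list
    \<Rightarrow> ('t, 'n) atom \<Rightarrow> ('t, 'n) atom list \<Rightarrow> bool" where
  "active Sig Nts R s lp H B \<longleftrightarrow> (H, B) \<in> clauses Sig Nts R s lp \<and>
     (\<forall>x \<in> set B. is_P x \<longrightarrow> provable Sig Nts R s lp x)"

inductive defined_goal :: "'t set \<Rightarrow> 'n set \<Rightarrow> ('t, 'n) rule set \<Rightarrow> 'n \<Rightarrow> 't list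
    \<Rightarrow> ('t, 'n) atom \<Rightarrow> bool"
  for Sig Nts R s lp where
  root: "defined_goal Sig Nts R s lp (Q lp)"
| body: "defined_goal Sig Nts R s lp H \<Longrightarrow> active Sig Nts R s lp H B \<Longrightarrow> x \<in> set B \<Longrightarrow> is_P x \<Longrightarrow>
         defined_goal Sig Nts R s lp x"

definition parent :: "'t set \<Rightarrow> 'n set \<Rightarrow> ('t, 'n) rule set \<Rightarrow> 'n \<Rightarrow> 't list
    \<Rightarrow> ('t, 'n) atom \<Rightarrow> ('t, 'n) atom \<Rightarrow> bool" where
  "parent Sig Nts R s lp H C \<longleftrightarrow> defined_goal Sig Nts R s lp H \<and> defined_goal Sig Nts R s lp C \<and>
     (\<exists>B. active Sig Nts R s lp H B \<and> C \<in> set B)"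

definition ancestor :: "'t set \<Rightarrow> 'n set \<Rightarrow> ('t, 'n) rule set \<Rightarrow> 'n \<Rightarrow> 't list
    \<Rightarrow> ('t, 'n) atom \<Rightarrow> ('t, 'n) atom \<Rightarrow> bool" where
  "ancestor Sig Nts R s lp = (parent Sig Nts R s lp)\<^sup>+\<^sup>+"

definition same_scc :: "'t set \<Rightarrow> 'n set \<Rightarrow> ('t, 'n) rule set \<Rightarrow> 'n \<Rightarrow> 't list
    \<Rightarrow> ('t, 'n) atom \<Rightarrow> ('t, 'n) atom \<Rightarrow> bool" where
  "same_scc Sig Nts R s lp A C \<longleftrightarrow> A = C \<or>
     (ancestor Sig Nts R s lp A C \<and> ancestor Sig Nts R s lp C A)"

text \<open>The defining formula of H is linear: no disjunct (active body) contains two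
  occurrences of defined goals from the same SCC.\<close>
definition linear_formula :: "'t set \<Rightarrow> 'n set \<Rightarrow> ('t, 'n) rule set \<Rightarrow> 'n \<Rightarrow> 't list
    \<Rightarrow> ('t, 'n) atom \<Rightarrow> bool" where
  "linear_formula Sig Nts R s lp H \<longleftrightarrow>
     (\<forall>B. active Sig Nts R s lp H B \<longrightarrow>
        \<not> (\<exists>i j. i < j \<and> j < length B \<and>
              defined_goal Sig Nts R s lp (B ! i) \<and> defined_goal Sig Nts R s lp (B ! j) \<and>
              same_scc Sig Nts R s lp (B ! i) (B ! j)))"

definition expl_linear :: "'t set \<Rightarrow> 'n set \<Rightarrow> ('t, 'n) rule set \<Rightarrow> 'n \<Rightarrow> 't list \<Rightarrow> bool" where
  "expl_linear Sig Nts R s lp \<longleftrightarrow>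
     (\<forall>H. defined_goal Sig Nts R s lp H \<longrightarrow> linear_formula Sig Nts R s lp H)"

end

theory Submission
  imports Defs
begin

text \<open>Every parent edge of the explanation graph goes from a goal to one whose input string
  is no longer. Hence all goals of an SCC have inputs of the same length. The only clause
  with two p-atoms in its body is (C3), with body atoms p(\<alpha>, u, v) and p(\<beta>, v, w) where
  v \<noteq> \<epsilon>; since \<alpha> \<noteq> \<epsilon> (no \<epsilon>-rules) and p(\<alpha>, u, v) is provable, \<alpha> consumes a nonempty
  part of u, so |v| < |u| and the two atoms lie in different SCCs.\<close>

fun input_length :: "('t, 'n) atom \<Rightarrow> nat" where
  "input_length (P _ u _) = length u"
| "input_length (Q l) = length l"
| "input_length (M _) = 0"

lemma provable_P_length:
  assumes "provable Sig Nts R s lp (P \<beta> u v)"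
    and nonempty_rhs: "\<forall>(A, \<alpha>) \<in> R. \<alpha> \<noteq> []"
  shows "length v \<le> length u \<and> (\<beta> \<noteq> [] \<longrightarrow> v \<noteq> [] \<longrightarrow> length v < length u)"
  using assms(1)
proof (induction "P \<beta> u v" arbitrary: \<beta> u v rule: provable.induct)
  case (clause B)
  from clause.hyps(1) show ?case
  proof (cases rule: clauses.cases)
    case (C2b a \<beta>' v')
    then have "length v \<le> length v'"
      using clause.hyps(2) by auto
    then show ?thesis using C2b by simp
  next
    case (C3b A \<alpha> \<beta>' v')
    then have "length v' < length u" and "length v \<le> length v'"
      using clause.hyps(2) nonempty_rhs by auto
    then show ?thesis by simp
  qed simp_all
qed

lemma not_defined_goal_M [simp]: "\<not> defined_goal Sig Nts R s lp (M r)"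
  by (auto elim: defined_goal.cases)

lemma parent_input_length_le:
  assumes "parent Sig Nts R s lp H C"
    and nonempty_rhs: "\<forall>(A, \<alpha>) \<in> R. \<alpha> \<noteq> []"
  shows "input_length C \<le> input_length H"
proof -
  from assms(1) obtain B where active: "active Sig Nts R s lp H B" and C: "C \<in> set B"
    and "defined_goal Sig Nts R s lp C"
    unfolding parent_def by blast
  then have not_M: "C \<noteq> M r" for r
    by auto
  from active have "(H, B) \<in> clauses Sig Nts R s lp"
    and provable: "\<And>x. x \<in> set B \<Longrightarrow> is_P x \<Longrightarrow> provable Sig Nts R s lp x"
    unfolding active_def by auto
  then show ?thesis
  proof (cases rule: clauses.cases)
    case C0
    then show ?thesis using C by simp
  next
    case (C2b a \<beta> v w)
    then show ?thesis using C by simp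
  next
    case (C3a A \<alpha> \<beta> u)
    then show ?thesis using C not_M by auto
  next
    case (C3b A \<alpha> \<beta> u v w)
    then have "provable Sig Nts R s lp (P \<alpha> u v)"
      using provable by simp
    then have "length v \<le> length u"
      using provable_P_length[OF _ nonempty_rhs] by blast
    then show ?thesis using C not_M C3b by auto
  qed (use C in simp_all)
qed

lemma ancestor_input_length_le:
  assumes "ancestor Sig Nts R s lp C D"
    and nonempty_rhs: "\<forall>(A, \<alpha>) \<in> R. \<alpha> \<noteq> []"
  shows "input_length D \<le> input_length C"
  using assms(1) unfolding ancestor_def
proof (induction rule: tranclp_induct)
  case (base D)
  then show ?case by (rule parent_input_length_le[OF _ nonempty_rhs])
next
  case (step D E)
  then show ?case using parent_input_length_le[OF step(2) nonempty_rhs] by simp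
qed

lemma same_scc_input_length_eq:
  assumes "same_scc Sig Nts R s lp X Y"
    and nonempty_rhs: "\<forall>(A, \<alpha>) \<in> R. \<alpha> \<noteq> []"
  shows "input_length X = input_length Y"
  using assms(1) ancestor_input_length_le[OF _ nonempty_rhs]
  unfolding same_scc_def by (meson antisym)

lemma two_defined_goals_in_active_body:
  assumes "active Sig Nts R s lp H B" and "i < j" and "j < length B"
    and "defined_goal Sig Nts R s lp (B ! i)"
  obtains A \<alpha> \<beta> u v w where "(A, \<alpha>) \<in> R" "v \<noteq> []"
    "provable Sig Nts R s lp (P \<alpha> u v)"
    "B ! i = P \<alpha> u v" "B ! j = P \<beta> v w"
proof -
  from assms(1) have "(H, B) \<in> clauses Sig Nts R s lp"
    and provable: "\<And>x. x \<in> set B \<Longrightarrow> is_P x \<Longrightarrow> provable Sig Nts R s lp x"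
    unfolding active_def by auto
  then show ?thesis
  proof (cases rule: clauses.cases)
    case (C3a A \<alpha> \<beta> u)
    then have "i = 0"
      using assms(2,3) by simp
    then show ?thesis using C3a assms(4) by simp
  next
    case (C3b A \<alpha> \<beta> u v w)
    then have "i \<noteq> 0"
      using assms(4) by (metis nth_Cons_0 not_defined_goal_M)
    then have "i = 1" "j = 2"
      using assms(2,3) C3b by simp_all
    then show ?thesis using C3b provable that by simp
  qed (use assms(2,3) in simp_all)
qed

theorem theorem3:
  fixes Sig :: "'t set" and Nts :: "'n set" and R :: "('t, 'n) rule set"
    and s :: 'n and lp :: "'t list"
  assumes "wf_grammar Sig Nts R s"
    and "no_useless Sig Nts R s"
    and "is_prefix Sig Nts R s lp"
  shows "expl_linear Sig Nts R s lp"
  unfolding expl_linear_def linear_formula_def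
proof (intro allI impI notI, elim exE conjE)
  fix H B i j
  assume body: "active Sig Nts R s lp H B" "i < j" "j < length B"
      "defined_goal Sig Nts R s lp (B ! i)"
    and scc: "same_scc Sig Nts R s lp (B ! i) (B ! j)"
  have nonempty_rhs: "\<forall>(A, \<alpha>) \<in> R. \<alpha> \<noteq> []"
    using assms(1) unfolding wf_grammar_def by auto
  obtain A \<alpha> \<beta> u v w where "(A, \<alpha>) \<in> R" "v \<noteq> []"
    and provable: "provable Sig Nts R s lp (P \<alpha> u v)"
    and B: "B ! i = P \<alpha> u v" "B ! j = P \<beta> v w"
    by (rule two_defined_goals_in_active_body[OF body])
  then have "\<alpha> \<noteq> []"
    using nonempty_rhs by blast
  with \<open>v \<noteq> []\<close> have "length v < length u"
    using provable_P_length[OF provable nonempty_rhs] by simp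
  moreover have "length u = length v"
    using same_scc_input_length_eq[OF scc nonempty_rhs] B by simp
  ultimately show False by simp
qed

end
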